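(* Let $G(\circ)$, $G(\ast)$ be groups on $G$ and $a\in G$ with $\mathrm{dist}_a>0$ and $|a|_\circ=|a|_\ast$. Then $\mathrm{dist}_a\ge 3$.
   Context: $|a|_\circ$, $|a|_\ast$ are the orders of $a$ in $G(\circ)$, $G(\ast)$. $\mathrm{dist}_a=|\{b\in G: a\circ b\ne a\ast b\}|$. *)

theory Defs
  imports "HOL-Algebra.Algebra"
begin

definition dist_at :: "('a, 'm) monoid_scheme \<Rightarrow> ('a, 'n) monoid_scheme \<Rightarrow> 'a \<Rightarrow> nat" where
  "dist_at G1 G2 a = card {b \<in> carrier G1. a \<otimes>\<^bsub>G1\<^esub> b \<noteq> a \<otimes>\<^bsub>G2\<^esub> b}"

end

theory Submission
  imports Defs
begin

text \<open>Left multiplication by \<open>a\<close> is a permutation \<open>f\<close> of \<open>G\<close> for \<open>\<circ>\<close> and \<open>g\<close> for \<open>\<ast>\<close>; in both, every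
  point has period exactly \<open>n = |a|\<close>. Since \<open>f\<close> and \<open>g\<close> agree outside the disagreement set \<open>D\<close>,
  they map \<open>D\<close> onto the same set. This rules out \<open>|D| = 1\<close>, and for \<open>D = {b, c}\<close> it forces
  \<open>g = f \<circ> (b c)\<close>. Composing with a transposition either splits the \<open>f\<close>-cycle through \<open>b\<close> and
  \<open>c\<close> into two shorter cycles or merges their two cycles into one of length \<open>2n\<close>; either way
  \<open>g\<close> has a point whose period is not \<open>n\<close>.\<close>

lemma image_disagreement_eq:
  assumes "bij_betw f S S" and "bij_betw g S S"
  shows "f ` {x \<in> S. f x \<noteq> g x} = g ` {x \<in> S. f x \<noteq> g x}"
proof -
  let ?D = "{x \<in> S. f x \<noteq> g x}"
  have D_eq: "?D = S - (S - ?D)"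
    by blast
  have "f ` ?D = S - f ` (S - ?D)"
    using assms(1) by (subst D_eq, subst inj_on_image_set_diff) (auto simp: bij_betw_def)
  also have "f ` (S - ?D) = g ` (S - ?D)"
    by (auto simp: image_def)
  also have "S - g ` (S - ?D) = g ` ?D"
    using assms(2) by (subst (2) D_eq, subst inj_on_image_set_diff) (auto simp: bij_betw_def)
  finally show ?thesis .
qed

lemma funpow_eq_along_orbit:
  assumes "0 < m" and "g y = f x"
    and "\<And>i. 0 < i \<Longrightarrow> i < m \<Longrightarrow> g ((f ^^ i) x) = f ((f ^^ i) x)"
  shows "(g ^^ m) y = (f ^^ m) x"
  using assms
proof (induction m)
  case 0
  then show ?case by simp
next
  case (Suc m)
  show ?case
  proof (cases "m = 0")
    case True
    then show ?thesis using Suc.prems by simp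
  next
    case False
    then have "(g ^^ m) y = (f ^^ m) x"
      using Suc by simp
    then show ?thesis
      using Suc.prems(3)[of m] False by simp
  qed
qed

lemma transposition_breaks_uniform_period:
  assumes "f ` S \<subseteq> S" and "0 < n"
    and f_period: "\<And>x k. x \<in> S \<Longrightarrow> (f ^^ k) x = x \<longleftrightarrow> n dvd k"
    and g_period: "\<And>x k. x \<in> S \<Longrightarrow> (g ^^ k) x = x \<longleftrightarrow> n dvd k"
    and "b \<in> S" "c \<in> S" "b \<noteq> c"
    and agree: "\<And>x. x \<in> S \<Longrightarrow> x \<notin> {b, c} \<Longrightarrow> g x = f x"
    and "g b = f c" and "g c = f b"
  shows False
proof -
  have f_orbit: "(f ^^ i) x \<in> S" if "x \<in> S" for i x
    using that \<open>f ` S \<subseteq> S\<close> by (induction i) auto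
  show False
  proof (cases "\<exists>j. (f ^^ j) b = c")
    case same_cycle: True
    then obtain j where j: "(f ^^ j) b = c" and below_j: "\<And>i. i < j \<Longrightarrow> (f ^^ i) b \<noteq> c"
      using exists_least_iff[of "\<lambda>j. (f ^^ j) b = c"] by blast
    have "0 < j"
      using j \<open>b \<noteq> c\<close> by (cases j) auto
    have "(f ^^ i) b \<noteq> b" if "0 < i" "i < j" for i
    proof
      assume "(f ^^ i) b = b"
      then have "(f ^^ (j - i)) b = (f ^^ (j - i + i)) b"
        by (simp add: funpow_add)
      with \<open>i < j\<close> have "(f ^^ (j - i)) b = (f ^^ j) b"
        by simp
      then show False
        using below_j[of "j - i"] j \<open>0 < i\<close> \<open>i < j\<close> by simp
    qed
    then have "(g ^^ j) c = (f ^^ j) b"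
      using funpow_eq_along_orbit[where f = f and g = g, OF \<open>0 < j\<close> \<open>g c = f b\<close>]
        agree f_orbit \<open>b \<in> S\<close> below_j
      by auto
    then have "n dvd j"
      using g_period \<open>c \<in> S\<close> j by simp
    then show False
      using f_period[OF \<open>b \<in> S\<close>, of j] j \<open>b \<noteq> c\<close> by simp
  next
    case different_cycles: False
    have "(f ^^ i) c \<notin> {b, c}" if "0 < i" "i < n" for i
    proof
      assume "(f ^^ i) c \<in> {b, c}"
      moreover have "(f ^^ i) c \<noteq> c"
        using f_period \<open>c \<in> S\<close> that by (auto dest: dvd_imp_le)
      ultimately have "(f ^^ (n - i)) b = (f ^^ (n - i + i)) c"
        by (simp add: funpow_add)
      with \<open>i < n\<close> have "(f ^^ (n - i)) b = (f ^^ n) c"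
        by simp
      then show False
        using different_cycles f_period[OF \<open>c \<in> S\<close>, of n] by simp
    qed
    then have "(g ^^ n) b = (f ^^ n) c"
      using funpow_eq_along_orbit[where f = f and g = g, OF \<open>0 < n\<close> \<open>g b = f c\<close>]
        agree f_orbit \<open>c \<in> S\<close>
      by auto
    then show False
      using f_period[OF \<open>c \<in> S\<close>, of n] g_period[OF \<open>b \<in> S\<close>, of n] \<open>b \<noteq> c\<close> by simp
  qed
qed

lemma card_disagreement_ge_3:
  assumes "finite S" and f_bij: "bij_betw f S S" and g_bij: "bij_betw g S S" and "0 < n"
    and f_period: "\<And>x k. x \<in> S \<Longrightarrow> (f ^^ k) x = x \<longleftrightarrow> n dvd k"
    and g_period: "\<And>x k. x \<in> S \<Longrightarrow> (g ^^ k) x = x \<longleftrightarrow> n dvd k"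
    and disagree: "{x \<in> S. f x \<noteq> g x} \<noteq> {}"
  shows "3 \<le> card {x \<in> S. f x \<noteq> g x}"
proof (rule ccontr)
  define D where "D = {x \<in> S. f x \<noteq> g x}"
  have in_D: "x \<in> D \<longleftrightarrow> x \<in> S \<and> f x \<noteq> g x" for x
    by (simp add: D_def)
  have img: "f ` D = g ` D"
    unfolding D_def using image_disagreement_eq[OF f_bij g_bij] .
  assume "\<not> 3 \<le> card D"
  moreover have "card D \<noteq> 0"
    using \<open>finite S\<close> disagree by (simp add: D_def)
  ultimately consider "card D = 1" | "card D = 2"
    by linarith
  then show False
  proof cases
    case 1
    then obtain b where D: "D = {b}"
      by (meson card_1_singletonE)
    then have "f b = g b"
      using img by simp
    then show False
      using in_D[of b] D by simp
  next
    case 2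
    then obtain b c where D: "D = {b, c}" "b \<noteq> c"
      by (meson card_2_iff)
    then have b: "b \<in> S" "f b \<noteq> g b" and c: "c \<in> S" "f c \<noteq> g c"
      using in_D[of b] in_D[of c] by auto
    moreover have "{f b, f c} = {g b, g c}"
      using img D by simp
    ultimately have swap: "g b = f c" "g c = f b"
      by (auto simp: doubleton_eq_iff)
    have agree: "g x = f x" if "x \<in> S" "x \<notin> {b, c}" for x
      using that in_D[of x] D by auto
    have "f ` S \<subseteq> S"
      using f_bij by (simp add: bij_betw_def)
    from transposition_breaks_uniform_period[OF this \<open>0 < n\<close> f_period g_period
        b(1) c(1) D(2) agree swap]
    show False .
  qed
qed

lemma (in group) bij_betw_mult_left:
  assumes "a \<in> carrier G"
  shows "bij_betw (\<lambda>x. a \<otimes> x) (carrier G) (carrier G)"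
proof (rule bij_betw_imageI)
  show "inj_on (\<lambda>x. a \<otimes> x) (carrier G)"
    using assms by (rule inj_on_cmult)
  have "x = a \<otimes> (inv a \<otimes> x)" if "x \<in> carrier G" for x
    using assms that by (simp add: m_assoc[symmetric])
  then show "(\<lambda>x. a \<otimes> x) ` carrier G = carrier G"
    using assms by auto
qed

lemma (in group) funpow_mult_left:
  assumes "a \<in> carrier G" and "x \<in> carrier G"
  shows "((\<lambda>y. a \<otimes> y) ^^ k) x = a [^] k \<otimes> x"
proof (induction k)
  case 0
  then show ?case using assms(2) by simp
next
  case (Suc k)
  have "((\<lambda>y. a \<otimes> y) ^^ Suc k) x = a \<otimes> (a [^] k \<otimes> x)"
    using Suc by simp
  also have "\<dots> = a [^] Suc k \<otimes> x"
    using assms by (subst nat_pow_Suc2) (simp_all add: m_assoc)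
  finally show ?case .
qed

lemma (in group) funpow_mult_left_eq_self_iff:
  assumes "a \<in> carrier G" and "x \<in> carrier G"
  shows "((\<lambda>y. a \<otimes> y) ^^ k) x = x \<longleftrightarrow> ord a dvd k"
proof -
  have "a [^] k \<otimes> x = x \<longleftrightarrow> a [^] k = \<one>"
    using assms by (metis l_one nat_pow_closed r_cancel_one')
  then show ?thesis
    using funpow_mult_left[OF assms] pow_eq_id[OF assms(1)] by simp
qed

theorem lemma4p13:
  fixes G1 :: "('a, 'm) monoid_scheme" and G2 :: "('a, 'n) monoid_scheme" and a :: 'a
  assumes "group G1" and "group G2"
    and "carrier G1 = carrier G2"
    and "finite (carrier G1)"
    and "a \<in> carrier G1"
    and "dist_at G1 G2 a > 0"
    and "group.ord G1 a = group.ord G2 a"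
  shows "dist_at G1 G2 a \<ge> 3"
proof -
  interpret G1: group G1 by fact
  interpret G2: group G2 by fact
  have a2: "a \<in> carrier G2"
    using assms(3,5) by simp
  have "3 \<le> card {x \<in> carrier G1. a \<otimes>\<^bsub>G1\<^esub> x \<noteq> a \<otimes>\<^bsub>G2\<^esub> x}"
  proof (rule card_disagreement_ge_3)
    show "bij_betw (\<lambda>x. a \<otimes>\<^bsub>G1\<^esub> x) (carrier G1) (carrier G1)"
      using assms(5) by (rule G1.bij_betw_mult_left)
    show "bij_betw (\<lambda>x. a \<otimes>\<^bsub>G2\<^esub> x) (carrier G1) (carrier G1)"
      using G2.bij_betw_mult_left[OF a2] assms(3) by simp
    show "0 < G1.ord a"
      using G1.ord_ge_1[OF assms(4,5)] by simp
    show "((\<lambda>y. a \<otimes>\<^bsub>G1\<^esub> y) ^^ k) x = x \<longleftrightarrow> G1.ord a dvd k" if "x \<in> carrier G1" for x k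
      using G1.funpow_mult_left_eq_self_iff[OF assms(5) that] .
    show "((\<lambda>y. a \<otimes>\<^bsub>G2\<^esub> y) ^^ k) x = x \<longleftrightarrow> G1.ord a dvd k" if "x \<in> carrier G1" for x k
      using G2.funpow_mult_left_eq_self_iff[OF a2] that assms(3,7) by simp
    show "{x \<in> carrier G1. a \<otimes>\<^bsub>G1\<^esub> x \<noteq> a \<otimes>\<^bsub>G2\<^esub> x} \<noteq> {}"
      using assms(6) by (simp add: dist_at_def card_gt_0_iff)
  qed (fact assms(4))
  then show ?thesis
    by (simp add: dist_at_def)
qed

end
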